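(* Let $n\ge 1$, $M\ge1$ be integers and $a=(a_0,\dots,a_n)\in\mathbb{Z}^{n+1}$ with $0\le a_i\le M$ and $a_0=a_n=0$. Let $V=\{j+i/(2n+2): 0\le j<M,\ 0\le i\le 2n+2,\ i,j\in\mathbb{Z}\}$, $W=V^{2n+1}$, and let $G_0$ be the directed graph defined below. Then: (i) if $y=(y_j)_{j\in\mathbb{Z}}$ is a tropical recurrent minimal sequence with all $y_j\in V$ satisfying $a$, then every letter $Y_i=(y_i,\dots,y_{i+2n})$ of the sequence $Y=Y(y)=(Y_i)_{i\in\mathbb{Z}}$ is a vertex of $G_0$ and there is an arrow in $G_0$ from $Y_i$ to $Y_{i+1}$ for every $i$; thus $Y$ gives a bi-infinite path $p(Y)$ in $G_0$; (ii) conversely, for every bi-infinite path $p$ in $G_0$ there is a unique tropical recurrent minimal sequence $y$ with values in $V$ satisfying $a$ such that $p=p(Y(y))$; (iii) $y$ is periodic with period $d$ if and only if $Y(y)$ is periodic with period $d$.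
   Context: A vector $z=(z_0,\dots,z_N)\in\mathbb{R}^{N+1}$ satisfies $a$ and is minimal if for each $0\le k\le N-n$ the minimum $\min_{0\le i\le n}\{a_i+z_{i+k}\}$ is attained at least twice, and for each $n\le j\le N-n$ there exists $j-n\le k\le j$ with $a_{j-k}+z_j=\min_{0\le i\le n}\{a_i+z_{k+i}\}$. The graph $G_0$ has as vertices the elements $(z_0,\dots,z_{2n})\in W$ which (with $N=2n$) satisfy $a$ and are minimal; there is an arrow from $(z_0,\dots,z_{2n})$ to $(z'_0,\dots,z'_{2n})$ iff $z_{i+1}=z'_i$ for $0\le i\le 2n-1$ (loops allowed). A tropical recurrent sequence is $y=(y_j)_{j\in\mathbb{Z}}$ with real entries; it satisfies $a$ if for every $k\in\mathbb{Z}$ the minimum $\min_{0\le i\le n}\{a_i+y_{i+k}\}$ is attained for at least two different $i$; it is minimal if for every $j$ there is $k$ with $j-n\le k\le j$ and $a_{j-k}+y_j=\min_{0\le i\le n}\{a_i+y_{i+k}\}$. A sequence $(x_j)_{j\in\mathbb{Z}}$ (of numbers or of letters of $W$) is periodic with period $d\ge 1$ if $x_{j+d}=x_j$ for all $j$. *)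

theory Defs
  imports Main "HOL.Real"
begin

text \<open>The tropical coefficient vector a = (a_0,...,a_n) is a function nat => int,
  only its values at 0..n matter. Sequences are indexed by int.\<close>

definition trop_min :: "nat \<Rightarrow> (nat \<Rightarrow> int) \<Rightarrow> (int \<Rightarrow> real) \<Rightarrow> int \<Rightarrow> real" where
  "trop_min n a y k = Min ((\<lambda>i. real_of_int (a i) + y (k + int i)) ` {..n})"

definition min_twice :: "nat \<Rightarrow> (nat \<Rightarrow> int) \<Rightarrow> (int \<Rightarrow> real) \<Rightarrow> int \<Rightarrow> bool" where
  "min_twice n a y k = (\<exists>i1\<le>n. \<exists>i2\<le>n. i1 \<noteq> i2 \<and>
      real_of_int (a i1) + y (k + int i1) = trop_min n a y k \<and>
      real_of_int (a i2) + y (k + int i2) = trop_min n a y k)"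

definition seq_satisfies :: "nat \<Rightarrow> (nat \<Rightarrow> int) \<Rightarrow> (int \<Rightarrow> real) \<Rightarrow> bool" where
  "seq_satisfies n a y = (\<forall>k::int. min_twice n a y k)"

definition seq_minimal :: "nat \<Rightarrow> (nat \<Rightarrow> int) \<Rightarrow> (int \<Rightarrow> real) \<Rightarrow> bool" where
  "seq_minimal n a y = (\<forall>j::int. \<exists>k. j - int n \<le> k \<and> k \<le> j \<and>
      real_of_int (a (nat (j - k))) + y j = trop_min n a y k)"

text \<open>Finite vectors z = (z_0,...,z_N), represented as lists of length N+1.\<close>

definition vec_fun :: "real list \<Rightarrow> int \<Rightarrow> real" where
  "vec_fun z j = z ! nat j"

definition vec_satisfies :: "nat \<Rightarrow> (nat \<Rightarrow> int) \<Rightarrow> real list \<Rightarrow> bool" where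
  "vec_satisfies n a z = (\<forall>k::int. 0 \<le> k \<and> k \<le> int (length z - 1) - int n \<longrightarrow>
      min_twice n a (vec_fun z) k)"

definition vec_minimal :: "nat \<Rightarrow> (nat \<Rightarrow> int) \<Rightarrow> real list \<Rightarrow> bool" where
  "vec_minimal n a z = (\<forall>j::int. int n \<le> j \<and> j \<le> int (length z - 1) - int n \<longrightarrow>
      (\<exists>k. j - int n \<le> k \<and> k \<le> j \<and>
        real_of_int (a (nat (j - k))) + vec_fun z j = trop_min n a (vec_fun z) k))"

definition Vset :: "nat \<Rightarrow> nat \<Rightarrow> real set" where
  "Vset n M = {real_of_int j + real_of_int i / real (2*n+2) | j i.
      0 \<le> j \<and> j < int M \<and> 0 \<le> i \<and> i \<le> int (2*n+2)}"

definition Wset :: "nat \<Rightarrow> nat \<Rightarrow> real list set" where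
  "Wset n M = {z. length z = 2*n+1 \<and> set z \<subseteq> Vset n M}"

definition G0_vertex :: "nat \<Rightarrow> nat \<Rightarrow> (nat \<Rightarrow> int) \<Rightarrow> real list \<Rightarrow> bool" where
  "G0_vertex n M a z = (z \<in> Wset n M \<and> vec_satisfies n a z \<and> vec_minimal n a z)"

definition G0_arrow :: "nat \<Rightarrow> nat \<Rightarrow> (nat \<Rightarrow> int) \<Rightarrow> real list \<Rightarrow> real list \<Rightarrow> bool" where
  "G0_arrow n M a z z' = (G0_vertex n M a z \<and> G0_vertex n M a z' \<and>
      (\<forall>i<2*n. z ! (i+1) = z' ! i))"

definition G0_path :: "nat \<Rightarrow> nat \<Rightarrow> (nat \<Rightarrow> int) \<Rightarrow> (int \<Rightarrow> real list) \<Rightarrow> bool" where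
  "G0_path n M a p = (\<forall>i::int. G0_vertex n M a (p i) \<and> G0_arrow n M a (p i) (p (i+1)))"

definition Yseq :: "nat \<Rightarrow> (int \<Rightarrow> real) \<Rightarrow> int \<Rightarrow> real list" where
  "Yseq n y i = map (\<lambda>t. y (i + int t)) [0..<2*n+1]"

definition periodic_with :: "(int \<Rightarrow> 'b) \<Rightarrow> nat \<Rightarrow> bool" where
  "periodic_with x d = (d \<ge> 1 \<and> (\<forall>j. x (j + int d) = x j))"

end

theory Submission
  imports Defs
begin

text \<open>A letter Y_i = (y_i, ..., y_(i+2n)) contains the n+1 complete windows of the
  recurrence starting at i, ..., i+n, but the minimality of only one position, its centre
  i+n: every other position lies in some window that is cut off. Since every position is
  the centre of exactly one letter, satisfaction, minimality and V-valuedness of y are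
  equivalent to all letters Y_i being vertices of G_0, and consecutive letters overlap as
  the arrows require. Conversely, a path in G_0 is Y(y) for y the sequence of first entries
  of its letters, and Y(y) determines y.\<close>

definition minimal_at :: "nat \<Rightarrow> (nat \<Rightarrow> int) \<Rightarrow> (int \<Rightarrow> real) \<Rightarrow> int \<Rightarrow> bool" where
  "minimal_at n a y j = (\<exists>k. j - int n \<le> k \<and> k \<le> j \<and>
      real_of_int (a (nat (j - k))) + y j = trop_min n a y k)"

lemma seq_minimal_iff_minimal_at: "seq_minimal n a y \<longleftrightarrow> (\<forall>j. minimal_at n a y j)"
  by (simp add: seq_minimal_def minimal_at_def)

lemma vec_minimal_iff_minimal_at:
  "vec_minimal n a z \<longleftrightarrow>
     (\<forall>j. int n \<le> j \<and> j \<le> int (length z - 1) - int n \<longrightarrow> minimal_at n a (vec_fun z) j)"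
  by (simp add: vec_minimal_def minimal_at_def)

lemma trop_min_shift:
  assumes "\<forall>t\<le>n. f (k + int t) = g (k' + int t)"
  shows "trop_min n a f k = trop_min n a g k'"
  unfolding trop_min_def using assms by (intro arg_cong[where f = Min] image_cong) auto

lemma min_twice_shift:
  assumes "\<forall>t\<le>n. f (k + int t) = g (k' + int t)"
  shows "min_twice n a f k = min_twice n a g k'"
  unfolding min_twice_def trop_min_shift[OF assms] using assms by (metis (no_types, lifting))

lemma minimal_at_shift:
  assumes "\<forall>t\<le>2*n. f (j - int n + int t) = g (j' - int n + int t)"
  shows "minimal_at n a f j = minimal_at n a g j'"
proof -
  have one_direction: "minimal_at n a g j'" if "minimal_at n a f j"
    and shift: "\<forall>t\<le>2*n. f (j - int n + int t) = g (j' - int n + int t)"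
    for f g :: "int \<Rightarrow> real" and j j'
  proof -
    obtain k where k: "j - int n \<le> k" "k \<le> j"
      and eq: "real_of_int (a (nat (j - k))) + f j = trop_min n a f k"
      using \<open>minimal_at n a f j\<close> unfolding minimal_at_def by blast
    let ?k' = "k + (j' - j)"
    have "f j = g j'"
      using spec[OF shift, of n] by simp
    moreover have "trop_min n a f k = trop_min n a g ?k'"
    proof (rule trop_min_shift, intro allI impI)
      fix t assume "t \<le> n"
      define s where "s = nat (k - (j - int n)) + t"
      have "s \<le> 2*n" and s: "int s = k - (j - int n) + int t"
        using k \<open>t \<le> n\<close> by (auto simp: s_def)
      moreover have "j - int n + int s = k + int t" and "j' - int n + int s = ?k' + int t"
        unfolding s by simp_all
      ultimately show "f (k + int t) = g (?k' + int t)"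
        using shift by metis
    qed
    ultimately show ?thesis
      unfolding minimal_at_def using k eq by (intro exI[of _ ?k']) simp
  qed
  moreover have "\<forall>t\<le>2*n. g (j' - int n + int t) = f (j - int n + int t)"
    using assms by simp
  ultimately show ?thesis
    using one_direction[OF _ assms] by blast
qed

lemma length_Yseq [simp]: "length (Yseq n y i) = 2*n+1"
  by (simp add: Yseq_def)

lemma nth_Yseq: "t < 2*n+1 \<Longrightarrow> Yseq n y i ! t = y (i + int t)"
  by (simp add: Yseq_def del: upt_Suc)

lemma vec_fun_Yseq: "0 \<le> j \<Longrightarrow> j \<le> 2 * int n \<Longrightarrow> vec_fun (Yseq n y i) j = y (i + j)"
  unfolding vec_fun_def by (subst nth_Yseq) auto

lemma inj_Yseq: "inj (Yseq n)"
proof (rule injI)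
  fix y y' assume "Yseq n y = Yseq n y'"
  then have "Yseq n y j ! 0 = Yseq n y' j ! 0" for j
    by simp
  then show "y = y'"
    by (simp add: nth_Yseq fun_eq_iff)
qed

lemma Yseq_in_Wset_iff: "(\<forall>i. Yseq n y i \<in> Wset n M) \<longleftrightarrow> range y \<subseteq> Vset n M"
proof
  assume "\<forall>i. Yseq n y i \<in> Wset n M"
  then have "y i \<in> Vset n M" for i
    using nth_mem[of 0 "Yseq n y i"] nth_Yseq[of 0 n y i] by (auto simp: Wset_def)
  then show "range y \<subseteq> Vset n M"
    by blast
qed (auto simp: Wset_def Yseq_def simp del: upt_Suc)

lemma vec_satisfies_Yseq_iff:
  "vec_satisfies n a (Yseq n y i) \<longleftrightarrow> (\<forall>k. i \<le> k \<and> k \<le> i + int n \<longrightarrow> min_twice n a y k)"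
proof -
  have "min_twice n a (vec_fun (Yseq n y i)) k = min_twice n a y (i + k)"
    if "0 \<le> k" "k \<le> int n" for k
    using that by (intro min_twice_shift) (auto simp: vec_fun_Yseq add.assoc)
  then have "vec_satisfies n a (Yseq n y i) \<longleftrightarrow>
      (\<forall>k. 0 \<le> k \<and> k \<le> int n \<longrightarrow> min_twice n a y (i + k))"
    unfolding vec_satisfies_def by auto
  also have "\<dots> \<longleftrightarrow> (\<forall>k. i \<le> k \<and> k \<le> i + int n \<longrightarrow> min_twice n a y k)"
  proof (intro iffI allI impI)
    fix k assume shifted: "\<forall>k. 0 \<le> k \<and> k \<le> int n \<longrightarrow> min_twice n a y (i + k)"
      and "i \<le> k \<and> k \<le> i + int n"
    with shifted[rule_format, of "k - i"] show "min_twice n a y k"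
      by simp
  qed simp
  finally show ?thesis .
qed

lemma vec_minimal_Yseq_iff: "vec_minimal n a (Yseq n y i) \<longleftrightarrow> minimal_at n a y (i + int n)"
proof -
  have "minimal_at n a (vec_fun (Yseq n y i)) (int n) = minimal_at n a y (i + int n)"
  proof (intro minimal_at_shift allI impI)
    fix t assume "t \<le> 2*n"
    then show "vec_fun (Yseq n y i) (int n - int n + int t) = y (i + int n - int n + int t)"
      by (simp add: vec_fun_Yseq)
  qed
  then show ?thesis
    unfolding vec_minimal_iff_minimal_at by auto
qed

lemma G0_vertex_Yseq_iff:
  "(\<forall>i. G0_vertex n M a (Yseq n y i)) \<longleftrightarrow>
     seq_satisfies n a y \<and> seq_minimal n a y \<and> range y \<subseteq> Vset n M"
proof -
  have "(\<forall>i. vec_satisfies n a (Yseq n y i)) \<longleftrightarrow> seq_satisfies n a y"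
    unfolding vec_satisfies_Yseq_iff seq_satisfies_def
  proof (intro iffI allI)
    fix k assume "\<forall>i k. i \<le> k \<and> k \<le> i + int n \<longrightarrow> min_twice n a y k"
    from this[rule_format, of k k] show "min_twice n a y k"
      by simp
  qed simp
  moreover have "(\<forall>i. vec_minimal n a (Yseq n y i)) \<longleftrightarrow> seq_minimal n a y"
    unfolding vec_minimal_Yseq_iff seq_minimal_iff_minimal_at
  proof (intro iffI allI)
    fix j assume "\<forall>i. minimal_at n a y (i + int n)"
    then show "minimal_at n a y j"
      by (metis diff_add_cancel)
  qed simp
  ultimately show ?thesis
    unfolding G0_vertex_def Yseq_in_Wset_iff[symmetric] by blast
qed

lemma G0_path_Yseq_iff:
  "G0_path n M a (Yseq n y) \<longleftrightarrow> seq_satisfies n a y \<and> seq_minimal n a y \<and> range y \<subseteq> Vset n M"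
proof -
  have "\<forall>t<2*n. Yseq n y i ! (t+1) = Yseq n y (i+1) ! t" for i
    by (auto simp: nth_Yseq add.assoc)
  then have "G0_path n M a (Yseq n y) \<longleftrightarrow> (\<forall>i. G0_vertex n M a (Yseq n y i))"
    unfolding G0_path_def G0_arrow_def by auto
  then show ?thesis
    unfolding G0_vertex_Yseq_iff .
qed

lemma G0_path_nth:
  assumes "G0_path n M a p" and "t \<le> 2*n"
  shows "p i ! t = p (i + int t) ! 0"
  using assms(2)
proof (induction t arbitrary: i)
  case (Suc t)
  have "p i ! Suc t = p (i+1) ! t"
    using assms(1) Suc.prems unfolding G0_path_def G0_arrow_def by simp
  also have "\<dots> = p (i + int (Suc t)) ! 0"
    using Suc.IH[of "i+1"] Suc.prems by (simp add: add.assoc)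
  finally show ?case .
qed simp

lemma G0_path_eq_Yseq:
  assumes "G0_path n M a p"
  shows "p = Yseq n (\<lambda>j. p j ! 0)"
proof
  fix i
  have length: "length (p i) = 2*n+1"
    using assms by (simp add: G0_path_def G0_vertex_def Wset_def)
  show "p i = Yseq n (\<lambda>j. p j ! 0) i"
  proof (rule nth_equalityI)
    fix t assume "t < length (p i)"
    then show "p i ! t = Yseq n (\<lambda>j. p j ! 0) i ! t"
      using G0_path_nth[OF assms, of t i] by (simp add: length nth_Yseq)
  qed (simp add: length)
qed

lemma periodic_Yseq_iff: "periodic_with (Yseq n y) d \<longleftrightarrow> periodic_with y d"
proof
  assume "periodic_with (Yseq n y) d"
  then have "Yseq n y (j + int d) ! 0 = Yseq n y j ! 0" for j
    by (simp add: periodic_with_def)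
  then show "periodic_with y d"
    using \<open>periodic_with (Yseq n y) d\<close> by (simp add: periodic_with_def nth_Yseq)
next
  assume "periodic_with y d"
  then have shifted: "y (j + int t + int d) = y (j + int t)" for j t
    unfolding periodic_with_def by blast
  have "y (j + int d + int t) = y (j + int t)" for j t
    using shifted[of j t] by (simp add: ac_simps)
  then show "periodic_with (Yseq n y) d"
    using \<open>periodic_with y d\<close> by (simp add: periodic_with_def Yseq_def)
qed

theorem lemma1:
  fixes n M :: nat and a :: "nat \<Rightarrow> int"
  assumes "n \<ge> 1" and "M \<ge> 1"
    and "\<forall>i\<le>n. 0 \<le> a i \<and> a i \<le> int M"
    and "a 0 = 0" and "a n = 0"
  shows "(\<forall>y. seq_satisfies n a y \<and> seq_minimal n a y \<and> range y \<subseteq> Vset n M \<longrightarrow>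
            (\<forall>i. G0_vertex n M a (Yseq n y i) \<and> G0_arrow n M a (Yseq n y i) (Yseq n y (i+1))))
       \<and> (\<forall>p. G0_path n M a p \<longrightarrow>
            (\<exists>!y. seq_satisfies n a y \<and> seq_minimal n a y \<and> range y \<subseteq> Vset n M \<and> p = Yseq n y))
       \<and> (\<forall>y d. seq_satisfies n a y \<and> seq_minimal n a y \<and> range y \<subseteq> Vset n M \<and> d \<ge> 1 \<longrightarrow>
            (periodic_with y d \<longleftrightarrow> periodic_with (Yseq n y) d))"
proof (intro conjI allI impI)
  fix y i assume "seq_satisfies n a y \<and> seq_minimal n a y \<and> range y \<subseteq> Vset n M"
  then show "G0_vertex n M a (Yseq n y i)"
    using G0_path_Yseq_iff[of n M a y] by (simp add: G0_path_def)
next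
  fix y i assume "seq_satisfies n a y \<and> seq_minimal n a y \<and> range y \<subseteq> Vset n M"
  then show "G0_arrow n M a (Yseq n y i) (Yseq n y (i+1))"
    using G0_path_Yseq_iff[of n M a y] by (simp add: G0_path_def)
next
  fix p assume path: "G0_path n M a p"
  define y where "y = (\<lambda>j. p j ! 0)"
  have "p = Yseq n y"
    using G0_path_eq_Yseq[OF path] by (simp add: y_def)
  with path have "seq_satisfies n a y \<and> seq_minimal n a y \<and> range y \<subseteq> Vset n M"
    using G0_path_Yseq_iff by simp
  with \<open>p = Yseq n y\<close>
  show "\<exists>!y. seq_satisfies n a y \<and> seq_minimal n a y \<and> range y \<subseteq> Vset n M \<and> p = Yseq n y"
    using injD[OF inj_Yseq] by metis
qed (simp add: periodic_Yseq_iff)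

end
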